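(* Let $F$ be a probability distribution on $[0,\infty)$ with finite mean $\mu>0$, and suppose its cumulative distribution function $F$ is differentiable in a neighborhood of $\mu$ with density $f=F'$ positive on that neighborhood. Then $p^*=\mu$ is the unique maximizer of $p\mapsto \mathsf{W}(p,F)$ over $p\in\mathbb{R}_+$.
   Context: Symmetric bilateral trade: $B,S$ i.i.d. with distribution $F$. Posting price $p$, trade occurs iff $B>p\ge S$. Welfare: $\mathsf{W}(p,F)=\mathbb{E}[S]+\mathbb{E}[(B-S)\mathbf 1_{B>p\ge S}]$. *)

theory Defs
  imports "HOL-Probability.Probability"
begin

text \<open>Welfare of posting price p in symmetric bilateral trade, where buyer value B
and seller value S are i.i.d. with law M (B is the first coordinate, S the second):
W(p,F) = E[S] + E[(B - S) 1{B > p >= S}].\<close>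

definition welfare :: "real measure \<Rightarrow> real \<Rightarrow> real" where
  "welfare M p =
     (\<integral>s. s \<partial>M) +
     (\<integral>bs. (fst bs - snd bs) * (if fst bs > p \<and> p \<ge> snd bs then 1 else 0) \<partial>(M \<Otimes>\<^sub>M M))"

end

theory Submission
  imports Defs
begin

text \<open>Splitting the trade indicator along the independent coordinates gives
  W(p) = \<mu> + E[(X - \<mu>) 1{X > p}], hence W(\<mu>) - W(p) = E[|X - \<mu>| 1{X between p and \<mu>}].
  This loss is positive as soon as the distribution charges an interval strictly between p
  and \<mu>, and the positive density near \<mu> makes the cdf strictly increasing there.\<close>

lemma (in pair_sigma_finite)
  fixes f g :: "_ \<Rightarrow> real"
  assumes f: "integrable M1 f" and g: "integrable M2 g"
  shows integrable_product_mult: "integrable (M1 \<Otimes>\<^sub>M M2) (\<lambda>z. f (fst z) * g (snd z))"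
    and integral_product_mult:
      "(\<integral>z. f (fst z) * g (snd z) \<partial>(M1 \<Otimes>\<^sub>M M2)) = integral\<^sup>L M1 f * integral\<^sup>L M2 g"
proof -
  have [measurable]: "f \<in> borel_measurable M1" "g \<in> borel_measurable M2"
    using f g by auto
  show int: "integrable (M1 \<Otimes>\<^sub>M M2) (\<lambda>z. f (fst z) * g (snd z))"
  proof (rule Fubini_integrable)
    have "integrable M1 (\<lambda>x. norm (f x) * (\<integral>y. norm (g y) \<partial>M2))"
      using f by (intro integrable_mult_left integrable_norm)
    then show "integrable M1 (\<lambda>x. \<integral>y. norm (f (fst (x, y)) * g (snd (x, y))) \<partial>M2)"
      by (simp add: abs_mult)
    show "AE x in M1. integrable M2 (\<lambda>y. f (fst (x, y)) * g (snd (x, y)))"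
      using g by (auto intro!: integrable_mult_right)
  qed measurable
  have "(\<integral>z. f (fst z) * g (snd z) \<partial>(M1 \<Otimes>\<^sub>M M2)) = (\<integral>x. \<integral>y. f x * g y \<partial>M2 \<partial>M1)"
    using integral_fst'[OF int] by simp
  then show "(\<integral>z. f (fst z) * g (snd z) \<partial>(M1 \<Otimes>\<^sub>M M2)) = integral\<^sup>L M1 f * integral\<^sup>L M2 g"
    by simp
qed

lemma (in real_distribution) welfare_eq_mean_plus_gain:
  assumes int: "integrable M (\<lambda>x. x)" and mu: "\<mu> = (\<integral>x. x \<partial>M)"
  shows "welfare M p = \<mu> + (\<integral>x. (x - \<mu>) * indicator {p<..} x \<partial>M)"
proof -
  interpret P: pair_sigma_finite M M
    by (simp add: pair_sigma_finite_def sigma_finite_measure_axioms)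
  let ?A = "{p<..} :: real set" and ?B = "{..p} :: real set"
  have iA: "integrable M (\<lambda>x. x * indicator ?A x)" and iB: "integrable M (\<lambda>x. x * indicator ?B x)"
    using int by (auto intro: integrable_real_mult_indicator)
  have jA: "integrable M (indicator ?A :: real \<Rightarrow> real)"
    and jB: "integrable M (indicator ?B :: real \<Rightarrow> real)"
    by (auto simp: integrable_indicator_iff emeasure_finite less_top[symmetric])
  have integrand_split: "(\<lambda>z::real \<times> real. (fst z - snd z) * (if fst z > p \<and> p \<ge> snd z then 1 else 0)) =
     (\<lambda>z. (fst z * indicator ?A (fst z)) * indicator ?B (snd z)
          - indicator ?A (fst z) * (snd z * indicator ?B (snd z)))"
    by (auto simp: indicator_def fun_eq_iff)
  have "welfare M p = \<mu> + (\<integral>x. x * indicator ?A x \<partial>M) * measure M ?B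
                        - measure M ?A * (\<integral>x. x * indicator ?B x \<partial>M)"
    unfolding welfare_def integrand_split mu
    using Bochner_Integration.integral_diff[OF P.integrable_product_mult[OF iA jB]
        P.integrable_product_mult[OF jA iB]]
    by (simp add: P.integral_product_mult[OF iA jB] P.integral_product_mult[OF jA iB])
  moreover have "measure M ?B = 1 - measure M ?A"
    using prob_compl[of ?A] by (simp add: Compl_eq_Diff_UNIV[symmetric])
  moreover have "(\<integral>x. x * indicator ?B x \<partial>M) = \<mu> - (\<integral>x. x * indicator ?A x \<partial>M)"
  proof -
    have "(\<integral>x. x * indicator ?B x + x * indicator ?A x \<partial>M) = \<mu>"
      unfolding mu by (intro Bochner_Integration.integral_cong) (auto simp: indicator_def)
    then show ?thesis using iA iB by simp
  qed
  moreover have "(\<integral>x. (x - \<mu>) * indicator ?A x \<partial>M)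
      = (\<integral>x. x * indicator ?A x \<partial>M) - \<mu> * measure M ?A"
    using iA jA by (simp add: left_diff_distrib)
  ultimately show ?thesis
    by (simp add: algebra_simps)
qed

lemma (in real_distribution) welfare_loss_eq:
  assumes int: "integrable M (\<lambda>x. x)" and mu: "\<mu> = (\<integral>x. x \<partial>M)"
  shows "welfare M \<mu> - welfare M p =
           (\<integral>x. \<bar>x - \<mu>\<bar> * indicator {min p \<mu><..max p \<mu>} x \<partial>M)"
proof -
  have gain_int: "integrable M (\<lambda>x. (x - \<mu>) * indicator A x)" if "A \<in> sets borel" for A
    using that int by (intro integrable_real_mult_indicator) auto
  have "welfare M \<mu> - welfare M p =
          (\<integral>x. (x - \<mu>) * indicator {\<mu><..} x - (x - \<mu>) * indicator {p<..} x \<partial>M)"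
    using welfare_eq_mean_plus_gain[OF int mu]
      Bochner_Integration.integral_diff[OF gain_int gain_int] by simp
  also have "\<dots> = (\<integral>x. \<bar>x - \<mu>\<bar> * indicator {min p \<mu><..max p \<mu>} x \<partial>M)"
    by (intro Bochner_Integration.integral_cong) (auto simp: indicator_def)
  finally show ?thesis .
qed

lemma integral_pos_if_pos_on_set:
  fixes h :: "'a \<Rightarrow> real"
  assumes "integrable M h" and "AE x in M. 0 \<le> h x"
    and A: "A \<in> sets M" and "measure M A > 0" and "\<And>x. x \<in> A \<Longrightarrow> h x > 0"
  shows "integral\<^sup>L M h > 0"
proof (rule ccontr)
  assume "\<not> integral\<^sup>L M h > 0"
  then have "integral\<^sup>L M h = 0"
    using integral_nonneg_AE[OF assms(2)] by linarith
  then have "AE x in M. h x = 0"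
    using integral_nonneg_eq_0_iff_AE[OF assms(1,2)] by simp
  then have avoid: "AE x in M. x \<notin> A"
    by (rule AE_mp) (rule AE_I2, use assms(5) in force)
  have "{x \<in> space M. \<not> x \<notin> A} = A"
    using sets.sets_into_space[OF A] by auto
  then have "emeasure M A = 0"
    using AE_iff_measurable[OF A] avoid by simp
  with assms(4) show False
    by (simp add: measure_def)
qed

lemma (in finite_borel_measure) measure_Ioc_pos_if_cdf_deriv_pos:
  assumes "a < b"
    and "\<And>x. a \<le> x \<Longrightarrow> x \<le> b \<Longrightarrow> \<exists>y. (cdf M has_real_derivative y) (at x) \<and> y > 0"
  shows "measure M {a<..b} > 0"
  using DERIV_pos_imp_increasing[OF assms] cdf_diff_eq[OF assms(1)] by simp

lemma Ioc_between_near: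
  fixes p \<mu> \<delta> :: real
  assumes "\<delta> > 0" and "p \<noteq> \<mu>"
  obtains a b where "a < b" and "{a..b} \<subseteq> {\<mu> - \<delta><..<\<mu> + \<delta>}"
    and "{a<..b} \<subseteq> {min p \<mu><..max p \<mu>} - {\<mu>}"
proof (cases "p < \<mu>")
  case True
  define a where "a = max p (\<mu> - \<delta> / 2)"
  have "p \<le> a" "\<mu> - \<delta> < a" "a < \<mu>"
    using True assms(1) by (auto simp: a_def)
  then show ?thesis
    using True by (intro that[of a "(a + \<mu>) / 2"]) auto
next
  case False
  define b where "b = min p (\<mu> + \<delta> / 2)"
  have "b \<le> p" "b < \<mu> + \<delta>" "\<mu> < b"
    using False assms by (auto simp: b_def)
  then show ?thesis
    using False by (intro that[of "(b + \<mu>) / 2" b]) auto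
qed

lemma (in real_distribution) welfare_lt_welfare_mean:
  assumes int: "integrable M (\<lambda>x. x)" and mu: "\<mu> = (\<integral>x. x \<partial>M)"
    and between: "{a<..b} \<subseteq> {min p \<mu><..max p \<mu>} - {\<mu>}" and "measure M {a<..b} > 0"
  shows "welfare M p < welfare M \<mu>"
proof -
  have "(\<integral>x. \<bar>x - \<mu>\<bar> * indicator {min p \<mu><..max p \<mu>} x \<partial>M) > 0"
  proof (rule integral_pos_if_pos_on_set[of _ _ "{a<..b}"])
    show "integrable M (\<lambda>x. \<bar>x - \<mu>\<bar> * indicator {min p \<mu><..max p \<mu>} x)"
      using int by (intro integrable_real_mult_indicator integrable_abs
          Bochner_Integration.integrable_diff integrable_const) auto
    fix x assume "x \<in> {a<..b}"
    with between have "x \<in> {min p \<mu><..max p \<mu>}" and "x \<noteq> \<mu>"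
      by auto
    then show "\<bar>x - \<mu>\<bar> * indicator {min p \<mu><..max p \<mu>} x > 0"
      by simp
  qed (use assms(4) in auto)
  then show ?thesis
    using welfare_loss_eq[OF int mu, of p] by linarith
qed

theorem corollary5:
  fixes M :: "real measure" and \<mu> :: real
  assumes "prob_space M"
    and "sets M = sets borel"
    and "AE x in M. x \<ge> 0"
    and "integrable M (\<lambda>x. x)"
    and "\<mu> = (\<integral>x. x \<partial>M)"
    and "\<mu> > 0"
    and "\<exists>\<delta>>0. \<exists>f. \<forall>x. \<bar>x - \<mu>\<bar> < \<delta> \<longrightarrow>
            (cdf M has_real_derivative f x) (at x) \<and> f x > 0"
  shows "\<forall>p\<ge>0. p \<noteq> \<mu> \<longrightarrow> welfare M p < welfare M \<mu>"
proof (intro allI impI)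
  fix p :: real assume "p \<noteq> \<mu>"
  interpret real_distribution M
    using assms(1,2) by (simp add: real_distribution_def real_distribution_axioms_def)
  obtain \<delta> f where "\<delta> > 0" and density: "\<And>x. \<bar>x - \<mu>\<bar> < \<delta> \<Longrightarrow>
      (cdf M has_real_derivative f x) (at x) \<and> f x > 0"
    using assms(7) by blast
  obtain a b where ab: "a < b" "{a..b} \<subseteq> {\<mu> - \<delta><..<\<mu> + \<delta>}"
    and between: "{a<..b} \<subseteq> {min p \<mu><..max p \<mu>} - {\<mu>}"
    using Ioc_between_near[OF \<open>\<delta> > 0\<close> \<open>p \<noteq> \<mu>\<close>] .
  have "measure M {a<..b} > 0"
  proof (rule measure_Ioc_pos_if_cdf_deriv_pos[OF ab(1)])
    fix x assume "a \<le> x" "x \<le> b"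
    with ab(2) have "\<bar>x - \<mu>\<bar> < \<delta>"
      by (auto simp: subset_iff)
    then show "\<exists>y. (cdf M has_real_derivative y) (at x) \<and> y > 0"
      using density by blast
  qed
  then show "welfare M p < welfare M \<mu>"
    using welfare_lt_welfare_mean[OF assms(4,5) between] by blast
qed

end
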